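(* Let $\mu$ be a probability measure on $\mathbb{C}$, $X_1,X_2,\ldots$ iid with law $\mu$, $0\le k_n\le n$ deterministic with $k_n = o(n)$, $\xi_l^{(n)}$ a deterministic triangular array, and $L_n(z) := \sum_{j=1}^{n-k_n}\frac{1}{z - X_j} + \sum_{l=1}^{k_n}\frac{1}{z - \xi_l^{(n)}}$. Then there is a set $G \subset (0,\infty)$ of Lebesgue measure zero such that for every $R \in (0,\infty)\setminus G$, \[ \limsup_{n\to\infty}\frac{1}{n}\log\sup_{|z| = R}|L_n(z)| \le 0 \] almost surely. *)

theory Defs
  imports "HOL-Probability.Probability"
begin

text \<open>L_n(z) = sum_{j=1}^{n-k_n} 1/(z - X_j) + sum_{l=1}^{k_n} 1/(z - xi_l^(n)),
  with x = sample sequence (X_1, X_2, ...) and xi = row n of the triangular array.\<close>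
definition Lfun :: "nat \<Rightarrow> nat \<Rightarrow> (nat \<Rightarrow> complex) \<Rightarrow> (nat \<Rightarrow> complex) \<Rightarrow> complex \<Rightarrow> complex" where
  "Lfun n kn x xi z = (\<Sum>j=1..n - kn. 1 / (z - x j)) + (\<Sum>l=1..kn. 1 / (z - xi l))"

definition poles :: "nat \<Rightarrow> nat \<Rightarrow> (nat \<Rightarrow> complex) \<Rightarrow> (nat \<Rightarrow> complex) \<Rightarrow> complex set" where
  "poles n kn x xi = x ` {1..n - kn} \<union> xi ` {1..kn}"

text \<open>|L_n(z)| as an extended real: +infinity at a pole (avoiding the HOL convention 1/0 = 0).\<close>
definition absL :: "nat \<Rightarrow> nat \<Rightarrow> (nat \<Rightarrow> complex) \<Rightarrow> (nat \<Rightarrow> complex) \<Rightarrow> complex \<Rightarrow> ereal" where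
  "absL n kn x xi z = (if z \<in> poles n kn x xi then \<infinity> else ereal (cmod (Lfun n kn x xi z)))"

definition supL :: "nat \<Rightarrow> nat \<Rightarrow> (nat \<Rightarrow> complex) \<Rightarrow> (nat \<Rightarrow> complex) \<Rightarrow> real \<Rightarrow> ereal" where
  "supL n kn x xi R = (SUP z\<in>sphere 0 R. absL n kn x xi z)"

definition eln :: "ereal \<Rightarrow> ereal" where
  "eln t = (if t = \<infinity> then \<infinity> else if t \<le> 0 then -\<infinity> else ereal (ln (real_of_ereal t)))"

end

theory Submission
  imports Defs "HOL-Real_Asymp.Real_Asymp"
begin

text \<open>
  If every pole of \<open>L_n\<close> (there are at most \<open>n\<close>) lies at distance at least \<open>\<delta>\<close> from the
  circle \<open>|z| = R\<close>, then \<open>|L_n| \<le> n / \<delta>\<close> on that circle.  Take \<open>\<delta>_n = exp (-\<epsilon> n) / (n + 1)\<close>.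
  For every sample, the radii \<open>R\<close> within \<open>\<delta>_n\<close> of the modulus of some pole form a set of
  Lebesgue measure at most \<open>2 n \<delta>_n\<close>, which is summable in \<open>n\<close>.  Borel--Cantelli on the
  product of Lebesgue measure and the probability space shows that almost every pair
  \<open>(R, \<omega>)\<close> is eventually \<open>\<delta>_n\<close>-far from all poles, so that
  \<open>limsup (1/n) log sup |L_n| \<le> lim (1/n) log (n / \<delta>_n) = \<epsilon>\<close> there; Fubini turns
  "almost every pair" into "for almost every \<open>R\<close>, almost surely".
\<close>

definition near_radii :: "complex set \<Rightarrow> real \<Rightarrow> real set" where
  "near_radii P w = {R. \<exists>p\<in>P. \<bar>cmod p - R\<bar> < w}"

lemma supL_le_of_poles_far:
  assumes "\<delta> > 0" "kn \<le> n"
    and far: "R \<notin> near_radii (poles n kn x xi) \<delta>"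
  shows "supL n kn x xi R \<le> ereal (real n / \<delta>)"
  unfolding supL_def
proof (rule SUP_least)
  fix z :: complex assume z: "z \<in> sphere 0 R"
  have dist_ge: "\<delta> \<le> cmod (z - p)" if "p \<in> poles n kn x xi" for p
    using far that norm_triangle_ineq3[of z p] z by (force simp: near_radii_def)
  then have "z \<notin> poles n kn x xi"
    using \<open>\<delta> > 0\<close> by fastforce
  have term_le: "cmod (1 / (z - p)) \<le> 1 / \<delta>" if "p \<in> poles n kn x xi" for p
    using dist_ge[OF that] \<open>\<delta> > 0\<close> by (simp add: norm_divide frac_le)
  have "cmod (Lfun n kn x xi z)
      \<le> (\<Sum>j=1..n - kn. cmod (1 / (z - x j))) + (\<Sum>l=1..kn. cmod (1 / (z - xi l)))"
    unfolding Lfun_def by (rule order_trans[OF norm_triangle_ineq add_mono[OF norm_sum norm_sum]])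
  also have "\<dots> \<le> (\<Sum>j=1..n - kn. 1 / \<delta>) + (\<Sum>l=1..kn. 1 / \<delta>)"
    by (intro add_mono sum_mono term_le) (auto simp: poles_def)
  also have "\<dots> = real n / \<delta>"
    using assms(2) by (simp add: diff_divide_distrib)
  finally show "absL n kn x xi z \<le> ereal (real n / \<delta>)"
    using \<open>z \<notin> _\<close> by (simp add: absL_def)
qed

lemma card_poles_le: "kn \<le> n \<Longrightarrow> card (poles n kn x xi) \<le> n"
  unfolding poles_def
  by (rule order_trans[OF card_Un_le]) (use card_image_le[of "{1..n-kn}" x] card_image_le[of "{1..kn}" xi] in auto)

lemma finite_poles: "finite (poles n kn x xi)"
  by (simp add: poles_def)

lemma eln_scaled_le:
  assumes "t \<le> ereal c" "c > 0"
  shows "ereal (1 / real n) * eln t \<le> ereal (ln c / real n)"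
proof (cases "t \<le> 0")
  case True
  then show ?thesis using assms by (auto simp: eln_def)
next
  case False
  then obtain r where r: "t = ereal r" "0 < r" "r \<le> c"
    using assms by (cases t) auto
  then show ?thesis by (simp add: eln_def divide_right_mono)
qed

definition window :: "nat \<Rightarrow> nat \<Rightarrow> real" where
  "window m n = exp (- real n / real (Suc m)) / real (Suc n)"

lemma window_pos: "window m n > 0"
  by (simp add: window_def)

lemma tendsto_ln_div_window: "(\<lambda>n. ln (real n / window m n) / real n) \<longlonglongrightarrow> 1 / real (Suc m)"
  unfolding window_def by (real_asymp, simp add: inverse_eq_divide)

lemma summable_window: "summable (\<lambda>n. real n * window m n)"
proof (rule summable_comparison_test')
  show "summable (\<lambda>n. exp (- 1 / real (Suc m)) ^ n)" by (simp add: summable_geometric)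
  show "norm (real n * window m n) \<le> exp (- 1 / real (Suc m)) ^ n" for n
  proof -
    have "exp (- real n / real (Suc m)) = exp (- 1 / real (Suc m)) ^ n"
      by (simp add: exp_of_nat_mult[symmetric])
    then have "real n * window m n = exp (- 1 / real (Suc m)) ^ n * (real n / real (Suc n))"
      by (simp add: window_def)
    also have "\<dots> \<le> exp (- 1 / real (Suc m)) ^ n"
      by (rule mult_left_le) auto
    finally show ?thesis
      using window_pos[of m n] by simp
  qed
qed

lemma emeasure_near_radii_le:
  assumes "finite P" "w \<ge> 0"
  shows "emeasure lborel (near_radii P w) \<le> ennreal (2 * real (card P) * w)"
proof -
  have "near_radii P w = (\<Union>p\<in>P. {cmod p - w <..< cmod p + w})"
    unfolding near_radii_def by (auto simp: abs_less_iff) (metis add.commute diff_less_eq)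
  then have "emeasure lborel (near_radii P w) \<le> (\<Sum>p\<in>P. emeasure lborel {cmod p - w <..< cmod p + w})"
    by (simp add: emeasure_subadditive_finite[OF assms(1)] image_subset_iff)
  also have "\<dots> = (\<Sum>p\<in>P. ennreal (2 * w))"
    using assms(2) by simp
  also have "\<dots> = ennreal (2 * real (card P) * w)"
    using assms(2) by (simp add: ennreal_of_nat_eq_real_of_nat ennreal_mult' mult_ac)
  finally show ?thesis .
qed

lemma AE_eventually_not_near_poles:
  fixes X :: "nat \<Rightarrow> 'a \<Rightarrow> complex" and \<xi> :: "nat \<Rightarrow> nat \<Rightarrow> complex"
  assumes "prob_space M" and [measurable]: "\<And>j. X j \<in> borel_measurable M"
    and "\<And>n. k n \<le> n" and "\<And>n. w n \<ge> 0" and "summable (\<lambda>n. real n * w n)"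
  shows "AE R in lborel. AE \<omega> in M.
           eventually (\<lambda>n. R \<notin> near_radii (poles n (k n) (\<lambda>j. X j \<omega>) (\<xi> n)) (w n)) sequentially"
proof -
  interpret M: prob_space M by fact
  interpret P: pair_sigma_finite lborel M
    by (intro pair_sigma_finite.intro lborel.sigma_finite_measure_axioms M.sigma_finite_measure_axioms)
  define A where "A n = {z \<in> space (lborel \<Otimes>\<^sub>M M).
    fst z \<in> near_radii (poles n (k n) (\<lambda>j. X j (snd z)) (\<xi> n)) (w n)}" for n
  have [measurable]: "A n \<in> sets (lborel \<Otimes>\<^sub>M M)" for n
  proof -
    have "A n = {z \<in> space (lborel \<Otimes>\<^sub>M M).
        (\<exists>j\<in>{1..n - k n}. \<bar>cmod (X j (snd z)) - fst z\<bar> < w n) \<or>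
        (\<exists>l\<in>{1..k n}. \<bar>cmod (\<xi> n l) - fst z\<bar> < w n)}"
      by (auto simp: A_def near_radii_def poles_def)
    then show ?thesis by (simp only:) measurable
  qed
  have A_le: "emeasure (lborel \<Otimes>\<^sub>M M) (A n) \<le> ennreal (2 * real n * w n)" for n
  proof -
    have "emeasure (lborel \<Otimes>\<^sub>M M) (A n) = (\<integral>\<^sup>+\<omega>. emeasure lborel ((\<lambda>R. (R, \<omega>)) -` A n) \<partial>M)"
      by (rule P.emeasure_pair_measure_alt2) measurable
    also have "\<dots> \<le> (\<integral>\<^sup>+\<omega>. ennreal (2 * real n * w n) \<partial>M)"
    proof (rule nn_integral_mono)
      fix \<omega> assume "\<omega> \<in> space M"
      then have "(\<lambda>R. (R, \<omega>)) -` A n = near_radii (poles n (k n) (\<lambda>j. X j \<omega>) (\<xi> n)) (w n)"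
        by (auto simp: A_def space_pair_measure)
      also have "emeasure lborel \<dots> \<le> ennreal (2 * real (card (poles n (k n) (\<lambda>j. X j \<omega>) (\<xi> n))) * w n)"
        using assms(4) by (intro emeasure_near_radii_le finite_poles)
      also have "\<dots> \<le> ennreal (2 * real n * w n)"
        using card_poles_le[OF assms(3)] assms(4) by (intro ennreal_leI mult_right_mono) auto
      finally show "emeasure lborel ((\<lambda>R. (R, \<omega>)) -` A n) \<le> ennreal (2 * real n * w n)" .
    qed
    also have "\<dots> = ennreal (2 * real n * w n)"
      by (simp add: M.emeasure_space_1)
    finally show ?thesis .
  qed
  have "AE z in lborel \<Otimes>\<^sub>M M. eventually (\<lambda>n. z \<in> space (lborel \<Otimes>\<^sub>M M) - A n) sequentially"
  proof (rule borel_cantelli_AE1)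
    show "emeasure (lborel \<Otimes>\<^sub>M M) (A n) < \<infinity>" for n
      using A_le[of n] by (simp add: le_less_trans)
    show "summable (\<lambda>n. measure (lborel \<Otimes>\<^sub>M M) (A n))"
    proof (rule summable_comparison_test')
      show "summable (\<lambda>n. 2 * (real n * w n))"
        using assms(5) by (rule summable_mult)
      show "norm (measure (lborel \<Otimes>\<^sub>M M) (A n)) \<le> 2 * (real n * w n)" for n
        using A_le[of n] assms(4) by (simp add: measure_def enn2real_leI mult.assoc)
    qed
  qed measurable
  then have "AE R in lborel. AE \<omega> in M.
      eventually (\<lambda>n. (R, \<omega>) \<in> space (lborel \<Otimes>\<^sub>M M) - A n) sequentially"
    by (rule P.AE_pair)
  then show ?thesis
    by (elim eventually_mono) (auto simp: A_def)
qed

lemma limsup_log_supL_le: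
  assumes "\<And>n. kn n \<le> n" and "\<And>n. w n > 0"
    and "eventually (\<lambda>n. R \<notin> near_radii (poles n (kn n) x (xi n)) (w n)) sequentially"
    and "(\<lambda>n. ln (real n / w n) / real n) \<longlonglongrightarrow> c"
  shows "limsup (\<lambda>n. ereal (1 / real n) * eln (supL n (kn n) x (xi n) R)) \<le> ereal c"
proof -
  have "eventually (\<lambda>n. ereal (1 / real n) * eln (supL n (kn n) x (xi n) R)
          \<le> ereal (ln (real n / w n) / real n)) sequentially"
    using assms(3) eventually_gt_at_top[of 0]
  proof eventually_elim
    case (elim n)
    then have "supL n (kn n) x (xi n) R \<le> ereal (real n / w n)"
      by (intro supL_le_of_poles_far assms(1,2))
    then show ?case
      by (rule eln_scaled_le) (use elim assms(2) in simp)
  qed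
  then have "limsup (\<lambda>n. ereal (1 / real n) * eln (supL n (kn n) x (xi n) R))
      \<le> limsup (\<lambda>n. ereal (ln (real n / w n) / real n))"
    by (rule Limsup_mono)
  also have "\<dots> = ereal c"
    using assms(4) by (intro lim_imp_Limsup tendsto_ereal) simp_all
  finally show ?thesis .
qed

lemma limsup_log_supL_nonpos:
  assumes "\<And>n. kn n \<le> n"
    and "\<And>m. eventually (\<lambda>n. R \<notin> near_radii (poles n (kn n) x (xi n)) (window m n)) sequentially"
  shows "limsup (\<lambda>n. ereal (1 / real n) * eln (supL n (kn n) x (xi n) R)) \<le> 0"
proof (rule ereal_le_epsilon2)
  fix e :: real assume "e > 0"
  then obtain m where m: "1 / real (Suc m) < e"
    using reals_Archimedean by (auto simp: inverse_eq_divide)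
  have "limsup (\<lambda>n. ereal (1 / real n) * eln (supL n (kn n) x (xi n) R)) \<le> ereal (1 / real (Suc m))"
    by (rule limsup_log_supL_le[OF assms(1) window_pos assms(2) tendsto_ln_div_window])
  also have "\<dots> \<le> 0 + ereal e"
    using m by simp
  finally show "limsup (\<lambda>n. ereal (1 / real n) * eln (supL n (kn n) x (xi n) R)) \<le> 0 + ereal e" .
qed

theorem mainTheorem17:
  fixes \<mu> :: "complex measure"
    and M :: "'a measure"
    and X :: "nat \<Rightarrow> 'a \<Rightarrow> complex"
    and k :: "nat \<Rightarrow> nat"
    and \<xi> :: "nat \<Rightarrow> nat \<Rightarrow> complex"
  assumes "prob_space \<mu>" and "sets \<mu> = sets borel"
    and "prob_space M"
    and "\<And>j. X j \<in> borel_measurable M"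
    and "prob_space.indep_vars M (\<lambda>_. borel) X UNIV"
    and "\<And>j. distr M borel (X j) = \<mu>"
    and "\<And>n. k n \<le> n"
    and "(\<lambda>n. real (k n) / real n) \<longlonglongrightarrow> 0"
  shows "\<exists>G \<subseteq> {0<..}. G \<in> null_sets lborel \<and>
           (\<forall>R. R > 0 \<and> R \<notin> G \<longrightarrow>
              (AE \<omega> in M. limsup (\<lambda>n. ereal (1 / real n) * eln (supL n (k n) (\<lambda>j. X j \<omega>) (\<xi> n) R)) \<le> 0))"
proof -
  have "AE R in lborel. \<forall>m. AE \<omega> in M.
      eventually (\<lambda>n. R \<notin> near_radii (poles n (k n) (\<lambda>j. X j \<omega>) (\<xi> n)) (window m n)) sequentially"
    unfolding AE_all_countable
    by (intro allI AE_eventually_not_near_poles assms(3,4,7) summable_window less_imp_le window_pos)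
  then have "AE R in lborel. AE \<omega> in M.
      limsup (\<lambda>n. ereal (1 / real n) * eln (supL n (k n) (\<lambda>j. X j \<omega>) (\<xi> n) R)) \<le> 0"
    by (elim eventually_mono) (auto simp: AE_all_countable[symmetric] elim!: eventually_mono
        intro: limsup_log_supL_nonpos assms(7))
  then obtain N where N: "N \<in> null_sets lborel" and AE_outside_N: "\<And>R. R \<notin> N \<Longrightarrow>
      AE \<omega> in M. limsup (\<lambda>n. ereal (1 / real n) * eln (supL n (k n) (\<lambda>j. X j \<omega>) (\<xi> n) R)) \<le> 0"
    by (elim AE_E3) auto
  show ?thesis
  proof (intro exI conjI allI impI)
    show "{0<..} \<inter> N \<in> null_sets lborel"
      using N by (rule null_set_Int1) simp
  qed (use AE_outside_N in auto)
qed

end
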